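(* Let $\varphi:\mathbb{R}^n\to(-\infty,\infty]$ be prox-bounded and lower semicontinuous around $\bar x\in\operatorname{dom}\varphi$. Then for all $\lambda>0$ sufficiently small the following are equivalent: (i) $\bar x$ is a local minimizer of $\varphi$; (ii) $\bar x$ is a local minimizer of the Moreau envelope $e_\lambda\varphi$.
   Context: For a proper function $\varphi:\mathbb{R}^n\to(-\infty,\infty]$ and $\lambda>0$, the Moreau envelope is $e_\lambda\varphi(x):=\inf_{y\in\mathbb{R}^n}\{\varphi(y)+\frac{1}{2\lambda}\|y-x\|^2\}$ and the proximal mapping is $\operatorname{Prox}_{\lambda\varphi}(x):=\operatorname{argmin}_{y}\{\varphi(y)+\frac{1}{2\lambda}\|y-x\|^2\}$. The function $\varphi$ is prox-bounded if there is $\lambda>0$ with $e_\lambda\varphi(x)>-\infty$ for some $x$. A point $\bar x\in\operatorname{dom}\varphi$ is a local minimizer of $\varphi$ if $\varphi(x)\ge\varphi(\bar x)$ for all $x$ in some neighborhood of $\bar x$. *)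

theory Defs
  imports "HOL-Analysis.Analysis"
begin

definition edom :: "('a \<Rightarrow> ereal) \<Rightarrow> 'a set" where
  "edom f = {x. f x < \<infinity>}"

definition proper_fun :: "('a \<Rightarrow> ereal) \<Rightarrow> bool" where
  "proper_fun f \<longleftrightarrow> (\<forall>x. f x \<noteq> -\<infinity>) \<and> edom f \<noteq> {}"

definition moreau_env :: "real \<Rightarrow> ('a::real_normed_vector \<Rightarrow> ereal) \<Rightarrow> 'a \<Rightarrow> ereal" where
  "moreau_env lam f x = (INF y. f y + ereal ((norm (y - x))\<^sup>2 / (2 * lam)))"

definition prox_bounded :: "('a::real_normed_vector \<Rightarrow> ereal) \<Rightarrow> bool" where
  "prox_bounded f \<longleftrightarrow> (\<exists>lam>0. \<exists>x. moreau_env lam f x > -\<infinity>)"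

definition lsc_at_pt :: "('a::topological_space \<Rightarrow> ereal) \<Rightarrow> 'a \<Rightarrow> bool" where
  "lsc_at_pt f x \<longleftrightarrow> f x \<le> Liminf (at x) f"

definition lsc_around :: "('a::metric_space \<Rightarrow> ereal) \<Rightarrow> 'a \<Rightarrow> bool" where
  "lsc_around f x \<longleftrightarrow> (\<exists>e>0. \<forall>z\<in>ball x e. lsc_at_pt f z)"

definition local_minimizer :: "('a::metric_space \<Rightarrow> ereal) \<Rightarrow> 'a \<Rightarrow> bool" where
  "local_minimizer f x \<longleftrightarrow> x \<in> edom f \<and> (\<exists>e>0. \<forall>z\<in>ball x e. f x \<le> f z)"

end

theory Submission
  imports Defs
begin

text \<open>
  Prox-boundedness yields a quadratic minorant \<open>phi y \<ge> M - |y - xbar|\<^sup>2 / lam0\<close>.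
  If \<open>phi xbar\<close> is minimal over a ball around \<open>xbar\<close>, then for small \<open>lam\<close>
  the penalty \<open>|y - x|\<^sup>2 / (2 lam)\<close> beats the minorant outside the ball, so the
  envelope stays above \<open>phi xbar \<ge> e\<^sub>\<lambda> phi xbar\<close> near \<open>xbar\<close>.
  Conversely, if \<open>e\<^sub>\<lambda> phi\<close> has a local minimum at \<open>xbar\<close>, comparing with the envelope at
  a point between \<open>xbar\<close> and \<open>y\<close> shows that points \<open>y\<close> far from \<open>xbar\<close> miss the infimum
  defining \<open>e\<^sub>\<lambda> phi xbar\<close> by a fixed gap; lower semicontinuity controls the points near
  \<open>xbar\<close>, so \<open>e\<^sub>\<lambda> phi xbar = phi xbar\<close>, and \<open>phi \<ge> e\<^sub>\<lambda> phi\<close> transfers the minimum to \<open>phi\<close>.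
\<close>

lemma moreau_env_le:
  fixes phi :: "'a::real_normed_vector \<Rightarrow> ereal"
  shows "moreau_env lam phi x \<le> phi y + ereal ((norm (y - x))\<^sup>2 / (2 * lam))"
  unfolding moreau_env_def by (rule INF_lower) simp

lemma moreau_env_le_self:
  fixes phi :: "'a::real_normed_vector \<Rightarrow> ereal"
  shows "moreau_env lam phi x \<le> phi x"
  using moreau_env_le[of lam phi x x] by simp

lemma moreau_env_local_min_gap:
  fixes phi :: "'a::real_normed_vector \<Rightarrow> ereal"
  assumes lam: "lam > 0" and d: "d > 0"
    and min: "\<forall>z\<in>ball xbar d. moreau_env lam phi xbar \<le> moreau_env lam phi z"
    and r: "0 \<le> r" "r \<le> norm (y - xbar)"
  shows "moreau_env lam phi xbar + ereal (min (r\<^sup>2 / (2 * lam)) (d * r / (4 * lam)))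
           \<le> phi y + ereal ((norm (y - xbar))\<^sup>2 / (2 * lam))"
proof -
  let ?e = "moreau_env lam phi"
  define t where "t = norm (y - xbar)"
  show ?thesis
  proof (cases "t < d")
    case True
    then have "y \<in> ball xbar d"
      by (simp add: t_def dist_norm norm_minus_commute)
    then have "?e xbar \<le> phi y"
      using min moreau_env_le_self[of lam phi y] by (blast intro: order_trans)
    moreover have "r\<^sup>2 / (2 * lam) \<le> t\<^sup>2 / (2 * lam)"
      using r lam by (intro divide_right_mono power_mono) (auto simp: t_def)
    ultimately show ?thesis
      unfolding t_def[symmetric] by (intro add_mono) (auto simp: min_le_iff_disj)
  next
    case False
    define s where "s = d / (2 * t)"
    have s: "0 < s" "s \<le> 1" "s * t = d / 2"
      using False d by (auto simp: s_def field_simps)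
    define x where "x = xbar + s *\<^sub>R (y - xbar)"
    have "x \<in> ball xbar d"
      using s d False by (simp add: x_def dist_norm t_def[symmetric])
    moreover have "norm (y - x) = (1 - s) * t"
    proof -
      have "y - x = (1 - s) *\<^sub>R (y - xbar)" by (simp add: x_def algebra_simps)
      then show ?thesis using s by (simp add: t_def)
    qed
    ultimately have near: "?e xbar \<le> phi y + ereal (((1 - s) * t)\<^sup>2 / (2 * lam))"
      using min moreau_env_le[of lam phi x y] by (metis order_trans)
    \<comment> \<open>\<open>x\<close> is \<open>d/2\<close> closer to \<open>y\<close> than \<open>xbar\<close>, which lowers the quadratic term by at least \<open>d t / (4 lam)\<close>\<close>
    have "((1 - s) * t)\<^sup>2 \<le> t\<^sup>2 - s * t * t"
      using s False d by (simp add: power2_eq_square algebra_simps mult_left_le_one_le)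
    also have "\<dots> \<le> t\<^sup>2 - d * r / 2"
    proof -
      have "d / 2 * r \<le> d / 2 * t"
        using r d by (intro mult_left_mono) (auto simp: t_def)
      moreover have "s * t * t = d / 2 * t" using s(3) by simp
      ultimately show ?thesis by linarith
    qed
    finally have "(((1 - s) * t)\<^sup>2 + d * r / 2) / (2 * lam) \<le> t\<^sup>2 / (2 * lam)"
      using lam by (intro divide_right_mono) auto
    then have "((1 - s) * t)\<^sup>2 / (2 * lam) + d * r / (4 * lam) \<le> t\<^sup>2 / (2 * lam)"
      by (simp add: add_divide_distrib)
    then have "phi y + ereal (((1 - s) * t)\<^sup>2 / (2 * lam)) + ereal (d * r / (4 * lam))
                 \<le> phi y + ereal (t\<^sup>2 / (2 * lam))"
      by (simp add: add.assoc add_left_mono)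
    with near have "?e xbar + ereal (d * r / (4 * lam)) \<le> phi y + ereal (t\<^sup>2 / (2 * lam))"
      by (meson add_right_mono order_trans)
    then show ?thesis
      unfolding t_def[symmetric] by (meson add_left_mono ereal_less_eq(3) min.cobounded2 order_trans)
  qed
qed

lemma quadratic_minorant_of_moreau_env:
  fixes phi :: "'a::real_normed_vector \<Rightarrow> ereal"
  assumes lam: "lam > 0" and bounded: "moreau_env lam phi x0 > -\<infinity>"
  shows "\<exists>M. \<forall>y. ereal (M - (norm (y - xbar))\<^sup>2 / lam) \<le> phi y"
proof -
  obtain m :: real where m: "ereal m < moreau_env lam phi x0"
    using bounded ereal_dense2 by blast
  define D where "D = norm (xbar - x0)"
  have "ereal (m - D\<^sup>2 / lam - (norm (y - xbar))\<^sup>2 / lam) \<le> phi y" for y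
  proof (cases "phi y")
    case (real q)
    have "ereal m < phi y + ereal ((norm (y - x0))\<^sup>2 / (2 * lam))"
      using m moreau_env_le[of lam phi x0 y] by (rule less_le_trans)
    then have m_less: "m < q + (norm (y - x0))\<^sup>2 / (2 * lam)"
      using real by simp
    have "norm (y - x0) \<le> norm (y - xbar) + D"
      unfolding D_def using norm_triangle_ineq[of "y - xbar" "xbar - x0"] by simp
    then have "(norm (y - x0))\<^sup>2 \<le> (norm (y - xbar) + D)\<^sup>2"
      by (intro power_mono) auto
    also have "\<dots> \<le> 2 * (norm (y - xbar))\<^sup>2 + 2 * D\<^sup>2"
      using sum_squares_bound[of "norm (y - xbar)" D] unfolding power2_sum by simp
    finally have "(norm (y - x0))\<^sup>2 / (2 * lam) \<le> (norm (y - xbar))\<^sup>2 / lam + D\<^sup>2 / lam"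
      using lam by (simp add: field_simps)
    with m_less real show ?thesis by simp
  next
    case MInf
    then show ?thesis
      using m moreau_env_le[of lam phi x0 y] by simp
  qed simp
  then show ?thesis by blast
qed

lemma moreau_env_ge_of_quadratic_minorant:
  fixes phi :: "'a::real_normed_vector \<Rightarrow> ereal"
  assumes lam: "lam > 0" and K: "2 * lam * K \<le> 1"
    and minorant: "\<forall>y. ereal (M - K * (norm (y - xbar))\<^sup>2) \<le> phi y"
  shows "ereal M \<le> moreau_env lam phi xbar"
  unfolding moreau_env_def
proof (rule INF_greatest)
  fix y
  have "K * (norm (y - xbar))\<^sup>2 \<le> (norm (y - xbar))\<^sup>2 / (2 * lam)"
    using K lam mult_right_mono[of K "1 / (2 * lam)" "(norm (y - xbar))\<^sup>2"]
    by (simp add: field_simps)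
  then have "ereal M \<le> ereal (M - K * (norm (y - xbar))\<^sup>2) + ereal ((norm (y - xbar))\<^sup>2 / (2 * lam))"
    by simp
  also have "\<dots> \<le> phi y + ereal ((norm (y - xbar))\<^sup>2 / (2 * lam))"
    using minorant by (intro add_right_mono) auto
  finally show "ereal M \<le> phi y + ereal ((norm (y - xbar))\<^sup>2 / (2 * lam))" .
qed

lemma moreau_env_eq_at_local_minimizer:
  fixes phi :: "'a::real_normed_vector \<Rightarrow> ereal"
  assumes lam: "lam > 0" and lsc: "lsc_at_pt phi xbar"
    and min: "local_minimizer (moreau_env lam phi) xbar"
    and bounded: "moreau_env lam phi xbar > -\<infinity>"
  shows "moreau_env lam phi xbar = phi xbar"
proof (rule antisym[OF moreau_env_le_self], rule ccontr)
  let ?e = "moreau_env lam phi"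
  obtain d where d: "d > 0" "\<forall>z\<in>ball xbar d. ?e xbar \<le> ?e z"
    using min unfolding local_minimizer_def by blast
  obtain v where v: "?e xbar = ereal v"
    using min bounded unfolding local_minimizer_def edom_def by (cases "?e xbar") auto
  assume "\<not> phi xbar \<le> ?e xbar"
  then obtain c where c: "v < c" "ereal c < phi xbar"
    using v ereal_dense2[of "ereal v" "phi xbar"] by (auto simp: not_le)
  have "eventually (\<lambda>z. ereal c < phi z) (at xbar)"
    using lsc c(2) unfolding lsc_at_pt_def le_Liminf_iff by (meson order_less_le_trans)
  then obtain r where r: "r > 0" and r_punctured: "\<forall>z. z \<noteq> xbar \<and> dist z xbar < r \<longrightarrow> ereal c < phi z"
    unfolding eventually_at by auto
  have near: "ereal c < phi z" if "dist z xbar < r" for z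
    using r_punctured that c(2) by (cases "z = xbar") auto
  define eta where "eta = min (c - v) (min (r\<^sup>2 / (2 * lam)) (d * r / (4 * lam)))"
  have eta: "eta > 0"
    using c d r lam by (simp add: eta_def)
  \<comment> \<open>near \<open>xbar\<close> the lower semicontinuity bounds \<open>phi\<close>, far from it the gap lemma\<close>
  have "ereal (v + eta) \<le> ?e xbar"
    unfolding moreau_env_def
  proof (rule INF_greatest)
    fix y
    show "ereal (v + eta) \<le> phi y + ereal ((norm (y - xbar))\<^sup>2 / (2 * lam))"
    proof (cases "dist y xbar < r")
      case True
      have "ereal (v + eta) \<le> ereal c"
        by (simp add: eta_def)
      also have "\<dots> \<le> phi y"
        using near True by (simp add: less_imp_le)
      finally have "ereal (v + eta) \<le> phi y" .
      then show ?thesis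
        using lam by (simp add: add_increasing2)
    next
      case False
      then have "r \<le> norm (y - xbar)"
        by (simp add: dist_norm)
      with r(1) have "?e xbar + ereal (min (r\<^sup>2 / (2 * lam)) (d * r / (4 * lam)))
                      \<le> phi y + ereal ((norm (y - xbar))\<^sup>2 / (2 * lam))"
        by (intro moreau_env_local_min_gap[OF lam d]) auto
      moreover have "ereal (v + eta) \<le> ?e xbar + ereal (min (r\<^sup>2 / (2 * lam)) (d * r / (4 * lam)))"
        unfolding v plus_ereal.simps ereal_less_eq(3) by (auto simp: eta_def min_le_iff_disj)
      ultimately show ?thesis
        by (rule order_trans[rotated])
    qed
  qed
  with v eta show False
    by simp
qed

lemma local_minimizer_of_moreau_env:
  fixes phi :: "'a::real_normed_vector \<Rightarrow> ereal"
  assumes lam: "lam > 0" and lsc: "lsc_at_pt phi xbar"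
    and min: "local_minimizer (moreau_env lam phi) xbar"
    and bounded: "moreau_env lam phi xbar > -\<infinity>"
  shows "local_minimizer phi xbar"
proof -
  have eq: "moreau_env lam phi xbar = phi xbar"
    using moreau_env_eq_at_local_minimizer[OF lam lsc min bounded] .
  obtain d where "d > 0" "\<forall>z\<in>ball xbar d. moreau_env lam phi xbar \<le> moreau_env lam phi z"
    using min unfolding local_minimizer_def by blast
  moreover have "xbar \<in> edom phi"
    using min eq unfolding local_minimizer_def edom_def by simp
  ultimately show ?thesis
    unfolding local_minimizer_def using eq moreau_env_le_self order_trans by metis
qed

lemma moreau_env_ge_at_local_minimizer:
  fixes phi :: "'a::real_normed_vector \<Rightarrow> ereal"
  assumes lam: "lam > 0" and ep: "ep > 0"
    and local_min: "\<forall>z\<in>ball xbar ep. phi xbar \<le> phi z" and p: "phi xbar = ereal p"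
    and minorant: "\<forall>y. ereal (M - K * (norm (y - xbar))\<^sup>2) \<le> phi y"
    and small: "8 * lam * (K * ep\<^sup>2 + \<bar>p - M\<bar>) \<le> ep\<^sup>2"
    and x: "x \<in> ball xbar (ep / 2)"
  shows "phi xbar \<le> moreau_env lam phi x"
  unfolding moreau_env_def
proof (rule INF_greatest)
  fix y
  define t where "t = norm (y - xbar)"
  have dist_nonneg: "0 \<le> (norm (y - x))\<^sup>2 / (2 * lam)"
    using lam by simp
  show "phi xbar \<le> phi y + ereal ((norm (y - x))\<^sup>2 / (2 * lam))"
  proof (cases "t < ep")
    case True
    then have "phi xbar \<le> phi y"
      using local_min by (simp add: t_def dist_norm norm_minus_commute)
    then show ?thesis
      using dist_nonneg by (simp add: add_increasing2)
  next
    case False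
    have "t \<le> norm (y - x) + norm (x - xbar)"
      unfolding t_def using norm_triangle_ineq[of "y - x" "x - xbar"] by simp
    moreover have "norm (x - xbar) < ep / 2"
      using x by (simp add: dist_norm norm_minus_commute)
    ultimately have "(t / 2)\<^sup>2 \<le> (norm (y - x))\<^sup>2"
      using False ep by (intro power_mono) auto
    then have far: "t\<^sup>2 / (8 * lam) \<le> (norm (y - x))\<^sup>2 / (2 * lam)"
      using lam by (simp add: field_simps power2_eq_square)
    have "8 * lam * \<bar>p - M\<bar> \<le> ep\<^sup>2 * (1 - 8 * lam * K)"
      using small by (simp add: algebra_simps)
    moreover from this have "0 \<le> 1 - 8 * lam * K"
      using lam ep by (smt (verit) mult_nonneg_nonneg mult_pos_neg zero_less_power)
    then have "ep\<^sup>2 * (1 - 8 * lam * K) \<le> t\<^sup>2 * (1 - 8 * lam * K)"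
      using False ep by (intro mult_right_mono power_mono) auto
    moreover have "8 * lam * (p - M) \<le> 8 * lam * \<bar>p - M\<bar>"
      using lam by (intro mult_left_mono) auto
    ultimately have "8 * lam * (p - M) \<le> t\<^sup>2 * (1 - 8 * lam * K)"
      by linarith
    then have "p \<le> (M - K * t\<^sup>2) + t\<^sup>2 / (8 * lam)"
      using lam by (simp add: field_simps)
    with far have "ereal p \<le> ereal (M - K * t\<^sup>2) + ereal ((norm (y - x))\<^sup>2 / (2 * lam))"
      by simp
    also have "\<dots> \<le> phi y + ereal ((norm (y - x))\<^sup>2 / (2 * lam))"
      using minorant by (intro add_right_mono) (simp add: t_def)
    finally show ?thesis
      using p by simp
  qed
qed

lemma moreau_env_local_minimizer_of_local_minimizer:
  fixes phi :: "'a::real_normed_vector \<Rightarrow> ereal"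
  assumes min: "local_minimizer phi xbar"
    and minorant: "\<forall>y. ereal (M - K * (norm (y - xbar))\<^sup>2) \<le> phi y"
  shows "\<exists>lam1>0. \<forall>lam. 0 < lam \<and> lam < lam1 \<longrightarrow> local_minimizer (moreau_env lam phi) xbar"
proof -
  obtain ep where ep: "ep > 0" and local_min: "\<forall>z\<in>ball xbar ep. phi xbar \<le> phi z"
    using min unfolding local_minimizer_def by blast
  have "ereal M \<le> phi xbar" "phi xbar < \<infinity>"
    using minorant[rule_format, of xbar] min by (auto simp: local_minimizer_def edom_def)
  then obtain p where p: "phi xbar = ereal p"
    by (cases "phi xbar") auto
  define C where "C = \<bar>K\<bar> * ep\<^sup>2 + \<bar>p - M\<bar> + 1"
  define lam1 where "lam1 = ep\<^sup>2 / (8 * C)"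
  have denominator: "C > 0"
    by (simp add: C_def add_nonneg_pos)
  then have lam1: "lam1 > 0"
    using ep by (simp add: lam1_def)
  have "local_minimizer (moreau_env lam phi) xbar" if lam: "0 < lam" "lam < lam1" for lam
  proof -
    have "K * ep\<^sup>2 \<le> \<bar>K\<bar> * ep\<^sup>2"
      by (intro mult_right_mono) auto
    then have "8 * lam * (K * ep\<^sup>2 + \<bar>p - M\<bar>) \<le> 8 * lam * C"
      using lam unfolding C_def by (intro mult_left_mono) auto
    also have "\<dots> \<le> 8 * lam1 * C"
      using lam denominator by simp
    also have "\<dots> = ep\<^sup>2"
      using denominator by (simp add: lam1_def)
    finally have small: "8 * lam * (K * ep\<^sup>2 + \<bar>p - M\<bar>) \<le> ep\<^sup>2" .
    have "moreau_env lam phi xbar \<le> phi xbar"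
      by (rule moreau_env_le_self)
    moreover have "phi xbar \<le> moreau_env lam phi z" if "z \<in> ball xbar (ep / 2)" for z
      using moreau_env_ge_at_local_minimizer[OF lam(1) ep local_min p minorant small that] .
    ultimately show ?thesis
      unfolding local_minimizer_def edom_def using ep p
      by (intro conjI exI[of _ "ep / 2"]) (auto intro: order_trans le_less_trans)
  qed
  with lam1 show ?thesis
    by blast
qed

theorem theorem3p2:
  fixes phi :: "real ^ 'n \<Rightarrow> ereal" and xbar :: "real ^ 'n"
  assumes "proper_fun phi"
    and "prox_bounded phi"
    and "lsc_around phi xbar"
    and "xbar \<in> edom phi"
  shows "\<exists>lam0>0. \<forall>lam. 0 < lam \<and> lam < lam0 \<longrightarrow>
           (local_minimizer phi xbar \<longleftrightarrow> local_minimizer (moreau_env lam phi) xbar)"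
proof -
  obtain l0 x0 where l0: "l0 > 0" "moreau_env l0 phi x0 > -\<infinity>"
    using assms(2) unfolding prox_bounded_def by blast
  then obtain M where "\<forall>y. ereal (M - (norm (y - xbar))\<^sup>2 / l0) \<le> phi y"
    using quadratic_minorant_of_moreau_env by blast
  then have minorant: "\<forall>y. ereal (M - (1 / l0) * (norm (y - xbar))\<^sup>2) \<le> phi y"
    by simp
  have lsc: "lsc_at_pt phi xbar"
    using assms(3) unfolding lsc_around_def by auto
  have env_to_phi: "local_minimizer phi xbar"
    if lam: "0 < lam" "lam < l0 / 2" and min: "local_minimizer (moreau_env lam phi) xbar" for lam
  proof (rule local_minimizer_of_moreau_env[OF lam(1) lsc min])
    have "ereal M \<le> moreau_env lam phi xbar"
      using lam l0 by (intro moreau_env_ge_of_quadratic_minorant[OF lam(1) _ minorant]) (simp add: field_simps)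
    then show "moreau_env lam phi xbar > -\<infinity>"
      using MInfty_neq_ereal(1) less_le_trans by fastforce
  qed
  show ?thesis
  proof (cases "local_minimizer phi xbar")
    case True
    then show ?thesis
      using moreau_env_local_minimizer_of_local_minimizer[OF True minorant] by blast
  next
    case False
    then show ?thesis
      using env_to_phi l0(1) by (intro exI[of _ "l0 / 2"]) auto
  qed
qed

end
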